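(* Let $p\geq 3$ and let $\Gamma$ be a $p$-hamiltonian graph in normalized form with vertices $v_1,\dots,v_\gamma$. Suppose $\Gamma$ has chords $d_{1,j}$ and $d_{k,l}$ with $1<j<k<l\leq\gamma$, $j\leq\gamma/2$, $j-1\leq\gamma/2-1$, $l-k<\lfloor\gamma/2\rfloor$, $j-1\leq l-k$ and $k-j\leq\gamma+1-l$. Then $k\leq\lfloor\gamma/2\rfloor+1$, and if $\Gamma'$ is the graph obtained by twisting $(d_{1,j},d_{k,l})$ into $(d_{1,k},d_{j,l})$ (i.e. replacing the chord $v_1v_j$ by a chord $v_1v_k$ and the chord $v_kv_l$ by a chord $v_jv_l$), then $\epsilon(\Gamma')<\epsilon(\Gamma)$, where for a normalized $p$-regular hamiltonian graph $\epsilon(\Gamma)=\sum_{d}\big(\lfloor\gamma/2\rfloor-\alpha(d)\big)$, the sum over all chords $d$.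
   Context: A $p$-hamiltonian graph is a finite connected loopless graph (multiple edges allowed), $p$-regular, with at least 2 vertices, containing a hamiltonian cycle $\Delta$. Normalized form: fix $\Delta$, $\gamma=|V(\Gamma)|$, and label vertices $v_1,\dots,v_\gamma$ so that $\Delta$ consists of edges joining $v_i,v_{i+1}$ (indices mod $\gamma$). Chords are the edges not in $\Delta$; $d_{a,b}$ ($a<b$) denotes a chord joining $v_a$ and $v_b$. Its amplitude is $\alpha(d_{a,b})=\min\{b-a,\gamma-b+a\}$. The graph $\Gamma'$ inherits the labeling and hamiltonian cycle of $\Gamma$. *)

theory Defs
  imports Complex_Main "HOL-Library.Multiset"
begin

text \<open>A normalized hamiltonian multigraph: vertices are 1..gamma, the hamiltonian
cycle Delta consists of the edges v_i v_(i+1) (indices mod gamma), and the chords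
(all other edges) form a multiset of pairs (a,b) with 1 <= a < b <= gamma
(loopless; parallel edges allowed).  Each vertex has degree 2 in Delta.\<close>

definition chord_deg :: "(nat \<times> nat) multiset \<Rightarrow> nat \<Rightarrow> nat" where
  "chord_deg C v = size (filter_mset (\<lambda>(a,b). a = v) C) + size (filter_mset (\<lambda>(a,b). b = v) C)"

definition normalized_p_hamiltonian :: "nat \<Rightarrow> nat \<Rightarrow> (nat \<times> nat) multiset \<Rightarrow> bool" where
  "normalized_p_hamiltonian p gamma C \<longleftrightarrow>
     gamma \<ge> 2 \<and>
     (\<forall>d \<in># C. 1 \<le> fst d \<and> fst d < snd d \<and> snd d \<le> gamma) \<and>
     (\<forall>v \<in> {1..gamma}. 2 + chord_deg C v = p)"

definition amplitude :: "nat \<Rightarrow> nat \<times> nat \<Rightarrow> nat" where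
  "amplitude gamma d = min (snd d - fst d) (gamma - snd d + fst d)"

definition epsilon :: "nat \<Rightarrow> (nat \<times> nat) multiset \<Rightarrow> nat" where
  "epsilon gamma C = (\<Sum>d \<in># C. gamma div 2 - amplitude gamma d)"

definition twist :: "(nat \<times> nat) multiset \<Rightarrow> nat \<times> nat \<Rightarrow> nat \<times> nat \<Rightarrow> nat \<times> nat \<Rightarrow> nat \<times> nat
                     \<Rightarrow> (nat \<times> nat) multiset" where
  "twist C d1 d2 e1 e2 = C - {#d1, d2#} + {#e1, e2#}"


end

theory Submission
  imports Defs
begin

(* Write h = gamma div 2.  Every chord has amplitude at most h, and
   epsilon is the sum of the defects h - alpha(d) over all chords.  A twist replaces
   two chords d1, d2 by e1, e2 and leaves all other chords untouched, so it lowers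
   epsilon exactly when alpha(d1) + alpha(d2) < alpha(e1) + alpha(e2).
   For the configuration of the theorem the hypotheses j - 1 <= l - k and
   k - j <= gamma + 1 - l give 2k <= gamma + 2, hence k <= h + 1, and all of
   d_{1,j}, d_{k,l}, d_{1,k} are "short" (amplitude = b - a).  Then
     alpha(d_{1,k}) + alpha(d_{j,l}) - alpha(d_{1,j}) - alpha(d_{k,l})
   is 2(k - j) if alpha(d_{j,l}) = l - j, and gamma + 2k - 2l if it equals
   gamma - l + j; both are positive since j < k and l - k < h. *)

lemma amplitude_le_half:
  assumes "fst d \<le> snd d" and "snd d \<le> gamma"
  shows "amplitude gamma d \<le> gamma div 2"
  using assms unfolding amplitude_def by (simp add: min_def) linarith

lemma amplitude_short:
  assumes "a \<le> b" and "b \<le> gamma" and "2 * (b - a) \<le> gamma"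
  shows "amplitude gamma (a, b) = b - a"
  using assms unfolding amplitude_def by (simp add: min_def)

lemma pair_subset_mset:
  assumes "x \<in># C" and "y \<in># C" and "x \<noteq> y"
  shows "{#x, y#} \<subseteq># C"
  using assms by (simp add: insert_subset_eq_iff in_diff_count)

lemma epsilon_twist:
  fixes gamma :: nat
  assumes "{#d1, d2#} \<subseteq># C"
  defines "defect \<equiv> \<lambda>d. gamma div 2 - amplitude gamma d"
  shows "epsilon gamma (twist C d1 d2 e1 e2) + defect d1 + defect d2
         = epsilon gamma C + defect e1 + defect e2"
proof -
  define R where "R = C - {#d1, d2#}"
  have C_split: "C = R + {#d1, d2#}"
    using assms(1) unfolding R_def by (metis subset_mset.diff_add)
  have "epsilon gamma C = sum_mset (image_mset defect R) + defect d1 + defect d2"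
    unfolding epsilon_def defect_def by (subst C_split) simp
  moreover have "epsilon gamma (twist C d1 d2 e1 e2)
                 = sum_mset (image_mset defect R) + defect e1 + defect e2"
    unfolding epsilon_def defect_def twist_def R_def by simp
  ultimately show ?thesis by simp
qed

lemma epsilon_twist_decreases:
  assumes "{#d1, d2#} \<subseteq># C"
    and "amplitude gamma e1 \<le> gamma div 2" and "amplitude gamma e2 \<le> gamma div 2"
    and "amplitude gamma d1 + amplitude gamma d2 < amplitude gamma e1 + amplitude gamma e2"
  shows "epsilon gamma (twist C d1 d2 e1 e2) < epsilon gamma C"
  using epsilon_twist[OF assms(1), of gamma e1 e2] assms(2-4) by linarith

(* In the configuration of the theorem the vertex v_k lies in the first half
   of the cycle: k - 1 = (k - j) + (j - 1) <= (gamma + 1 - l) + (l - k). *)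
lemma twist_config_k_bound:
  fixes gamma j k l :: nat
  assumes "j < k" and "k < l" and "l \<le> gamma"
    and "j - 1 \<le> l - k" and "k - j \<le> gamma + 1 - l"
  shows "2 * k \<le> gamma + 2"
  using assms by linarith

lemma twist_config_amplitude_gain:
  fixes gamma j k l :: nat
  assumes "1 < j" and "j < k" and "k < l" and "l \<le> gamma"
    and "2 * j \<le> gamma" and "2 * k \<le> gamma + 2" and "l - k < gamma div 2"
  shows "amplitude gamma (1, j) + amplitude gamma (k, l)
         < amplitude gamma (1, k) + amplitude gamma (j, l)"
proof -
  have "amplitude gamma (1, j) = j - 1"
    using assms by (intro amplitude_short) auto
  moreover have "amplitude gamma (k, l) = l - k"
    using assms by (intro amplitude_short) auto
  moreover have "amplitude gamma (1, k) = k - 1"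
    using assms by (intro amplitude_short) auto
  moreover have "j - 1 + (l - k) < k - 1 + min (l - j) (gamma - l + j)"
    using assms by (simp add: min_def) linarith
  ultimately show ?thesis by (simp add: amplitude_def)
qed

theorem mainTheorem9:
  fixes p gamma j k l :: nat and C :: "(nat \<times> nat) multiset"
  assumes "p \<ge> 3"
    and "normalized_p_hamiltonian p gamma C"
    and "(1, j) \<in># C" and "(k, l) \<in># C"
    and "1 < j" and "j < k" and "k < l" and "l \<le> gamma"
    and "real j \<le> real gamma / 2"
    and "real j - 1 \<le> real gamma / 2 - 1"
    and "l - k < gamma div 2"
    and "j - 1 \<le> l - k"
    and "k - j \<le> gamma + 1 - l"
  shows "k \<le> gamma div 2 + 1 \<and>
         epsilon gamma (twist C (1, j) (k, l) (1, k) (j, l)) < epsilon gamma C"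
proof
  have j_half: "2 * j \<le> gamma" using assms(9) by linarith
  have k_half: "2 * k \<le> gamma + 2"
    using twist_config_k_bound assms(6-8,12,13) by blast
  then show "k \<le> gamma div 2 + 1" by linarith
  have chords: "{#(1, j), (k, l)#} \<subseteq># C"
    using assms(3-6) by (intro pair_subset_mset) auto
  have "amplitude gamma (1, k) \<le> gamma div 2" "amplitude gamma (j, l) \<le> gamma div 2"
    using assms(5-8) by (auto intro: amplitude_le_half)
  moreover have "amplitude gamma (1, j) + amplitude gamma (k, l)
                 < amplitude gamma (1, k) + amplitude gamma (j, l)"
    using twist_config_amplitude_gain assms(5-8,11) j_half k_half by blast
  ultimately show "epsilon gamma (twist C (1, j) (k, l) (1, k) (j, l)) < epsilon gamma C"
    using epsilon_twist_decreases[OF chords] by blast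
qed

end
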